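(* There exist Polish spaces $I_X, I_Y \subseteq \mathbb{C}$, a base $\mathcal{B}$ of $I_X$ consisting of clopen sets, and a continuous, open surjection $f : I_X \to I_Y$ such that $f(B)$ is clopen in $I_Y$ for every $B \in \mathcal{B}$, but $f$ is not closed--$F_\sigma$, i.e. there is a closed set $F \subseteq I_X$ such that $f(F)$ is not an $F_\sigma$ subset of $I_Y$.
   Context: A function is closed--$F_\sigma$ if it maps every closed set to an $F_\sigma$ set (a countable union of closed sets). *)

theory Defs
  imports "HOL-Analysis.Analysis"
begin

definition polish_subspace :: "'a::topological_space set \<Rightarrow> bool" where
  "polish_subspace S \<longleftrightarrow>
     completely_metrizable_space (top_of_set S) \<and> separable_space (top_of_set S)"

end

theory Submission
  imports Defs
begin

(* Fix an irrational s.  Let X be the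
   plane of points with both coordinates irrational, with the countable set
   {(s + q, s) | q rational} removed, let Y be the irrational numbers on the real axis, and
   let f be the projection z \<mapsto> Re z.  Both spaces are Polish, being G_delta sets.  The
   intersections of X with rectangles with rational corners form a base of clopen sets.
   Every vertical fibre of f over an irrational x is dense in the irrational vertical line,
   so f maps these rectangles onto clopen strips of Y, and f is a continuous open surjection.
   But f maps the closed horizontal line F = X \<inter> {Im z = s} onto the irrationals without
   s + \<rat>, which is not F_sigma in the irrationals by the Baire category theorem. *)

(* The euclidean topology of a second countable type is second countable in the sense of
   abstract topology; this gives separability of all its subspaces. *)
lemma second_countable_euclidean:
  "second_countable (euclidean :: 'a::second_countable_topology topology)"
proof -
  obtain \<B> :: "'a set set" where "countable \<B>" "topological_basis \<B>"
    using ex_countable_basis by blast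
  then show ?thesis
    unfolding second_countable_def
    by (metis open_openin topological_basisE topological_basis_open)
qed

lemma polish_subspace_gdelta:
  fixes S :: "'a::{complete_space, second_countable_topology} set"
  assumes "gdelta_in euclidean S"
  shows "polish_subspace S"
  unfolding polish_subspace_def
  using assms
  by (simp add: completely_metrizable_space_gdelta_in completely_metrizable_space_euclidean
      second_countable_imp_separable_space second_countable_subtopology second_countable_euclidean)

lemma polish_subspace_closed_diff_countable_closed:
  fixes S :: "'a::{complete_space, second_countable_topology} set"
  assumes "closed S" "countable \<C>" "\<And>C. C \<in> \<C> \<Longrightarrow> closed C"
  shows "polish_subspace (S - \<Union>\<C>)"
proof (rule polish_subspace_gdelta, rule gdelta_in_diff)
  show "gdelta_in euclidean S"
    by (rule closed_imp_gdelta_in[OF metrizable_space_euclidean]) (simp add: assms(1))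
  show "fsigma_in euclidean (\<Union>\<C>)"
    using assms(2,3) by (intro fsigma_in_Union) (auto intro: closed_imp_fsigma_in)
qed

(* Otherwise A = T \<inter> Y with T a countable union of closed sets, each
   missing E and hence nowhere dense; together with the points outside A they would cover
   the whole space by countably many nowhere dense closed sets. *)
lemma not_fsigma_in_dense_complement:
  fixes A E Y :: "'a::{complete_space, perfect_space} set"
  assumes countable: "countable (- A)" and E: "E \<subseteq> Y - A" "closure E = UNIV"
  shows "\<not> fsigma_in (top_of_set Y) A"
proof
  assume "fsigma_in (top_of_set Y) A"
  then obtain T where T: "fsigma_in euclidean T" "A = T \<inter> Y"
    by (auto simp: fsigma_in_subtopology)
  then obtain \<K> where \<K>: "countable \<K>" "\<K> \<subseteq> Collect (closedin euclidean)" "\<Union>\<K> = T"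
    unfolding fsigma_in_def union_of_def by blast
  have nowhere_dense: "interior K = {}" if "K \<in> \<K>" for K
  proof -
    have "interior K \<inter> E = {}"
      using that E(1) T(2) \<K>(3) interior_subset by blast
    then show ?thesis
      using open_Int_closure_eq_empty[of "interior K" E] E(2) by simp
  qed
  define \<G> where "\<G> = \<K> \<union> (\<lambda>x. {x}) ` (- A)"
  have "euclidean interior_of (\<Union>\<G>) = {}"
  proof (rule Baire_category_alt)
    show "countable \<G>"
      using \<K>(1) countable by (simp add: \<G>_def)
    show "closedin euclidean G \<and> euclidean interior_of G = {}" if "G \<in> \<G>" for G
      using that \<K>(2) nowhere_dense by (auto simp: \<G>_def)
  qed (simp add: completely_metrizable_space_euclidean)
  moreover have "\<Union>\<G> = UNIV"
    using T(2) \<K>(3) by (auto simp: \<G>_def)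
  ultimately show False
    by simp
qed

lemma fsigma_in_of_real_image:
  fixes A Y :: "real set"
  assumes "A \<subseteq> Y"
  shows "fsigma_in (top_of_set (complex_of_real ` Y)) (complex_of_real ` A) \<longleftrightarrow>
         fsigma_in (top_of_set Y) A"
proof -
  have "homeomorphic_maps (top_of_set Y) (top_of_set (complex_of_real ` Y)) complex_of_real Re"
    unfolding homeomorphic_maps_def
  proof (intro conjI ballI)
    show "continuous_map (top_of_set Y) (top_of_set (complex_of_real ` Y)) complex_of_real"
      by (simp add: image_subset_iff)
    show "continuous_map (top_of_set (complex_of_real ` Y)) (top_of_set Y) Re"
      by (auto simp: continuous_on_Re continuous_on_id)
  qed auto
  then have "homeomorphic_map (top_of_set Y) (top_of_set (complex_of_real ` Y)) complex_of_real"
    using homeomorphic_map_maps by blast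
  from homeomorphic_map_fsigmaness[OF this] show ?thesis
    using assms by simp
qed

definition rectangle :: "real \<Rightarrow> real \<Rightarrow> real \<Rightarrow> real \<Rightarrow> complex set" where
  "rectangle a b c d = {z. a < Re z \<and> Re z < b \<and> c < Im z \<and> Im z < d}"

definition rational_rectangles :: "complex set \<Rightarrow> complex set set" where
  "rational_rectangles S =
     {S \<inter> rectangle a b c d | a b c d. a \<in> \<rat> \<and> b \<in> \<rat> \<and> c \<in> \<rat> \<and> d \<in> \<rat> \<and> a < b \<and> c < d}"

lemma open_rectangle: "open (rectangle a b c d)"
  unfolding rectangle_def by (intro open_Collect_conj open_Collect_less continuous_intros)

lemma rational_rectangles_base:
  "openin (top_of_set S) = arbitrary union_of (\<lambda>B. B \<in> rational_rectangles S)"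
  unfolding openin_topology_base_unique
proof (intro conjI allI impI)
  fix B assume "B \<in> rational_rectangles S"
  then show "openin (top_of_set S) B"
    unfolding rational_rectangles_def using open_rectangle by auto
next
  fix U x assume Ux: "openin (top_of_set S) U \<and> x \<in> U"
  then have xS: "x \<in> S"
    by (meson openin_imp_subset subsetD)
  from Ux obtain e where e: "e > 0" "\<And>x'. x' \<in> S \<Longrightarrow> dist x' x < e \<Longrightarrow> x' \<in> U"
    by (auto simp: openin_euclidean_subtopology_iff)
  obtain a where a: "a \<in> \<rat>" "Re x - e/2 < a" "a < Re x"
    using Rats_dense_in_real[of "Re x - e/2" "Re x"] \<open>e > 0\<close> by auto
  obtain b where b: "b \<in> \<rat>" "Re x < b" "b < Re x + e/2"
    using Rats_dense_in_real[of "Re x" "Re x + e/2"] \<open>e > 0\<close> by auto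
  obtain c where c: "c \<in> \<rat>" "Im x - e/2 < c" "c < Im x"
    using Rats_dense_in_real[of "Im x - e/2" "Im x"] \<open>e > 0\<close> by auto
  obtain d where d: "d \<in> \<rat>" "Im x < d" "d < Im x + e/2"
    using Rats_dense_in_real[of "Im x" "Im x + e/2"] \<open>e > 0\<close> by auto
  have "S \<inter> rectangle a b c d \<subseteq> U"
  proof
    fix z assume z: "z \<in> S \<inter> rectangle a b c d"
    have "dist z x \<le> \<bar>Re (z - x)\<bar> + \<bar>Im (z - x)\<bar>"
      unfolding dist_norm by (rule cmod_le)
    also have "\<dots> < e"
      using z a b c d by (auto simp: rectangle_def abs_less_iff)
    finally show "z \<in> U"
      using e z by auto
  qed
  moreover have "S \<inter> rectangle a b c d \<in> rational_rectangles S"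
    unfolding rational_rectangles_def using a b c d
    by (intro CollectI exI[of _ a] exI[of _ b] exI[of _ c] exI[of _ d]) simp
  moreover have "x \<in> S \<inter> rectangle a b c d"
    using xS a b c d by (simp add: rectangle_def)
  ultimately show "\<exists>B. B \<in> rational_rectangles S \<and> x \<in> B \<and> B \<subseteq> U"
    by blast
qed

(* Points with both coordinates irrational: the boundary of a rational rectangle misses it. *)
definition irrational_plane :: "complex set" where
  "irrational_plane = {z. Re z \<notin> \<rat> \<and> Im z \<notin> \<rat>}"

lemma rational_rectangle_clopen:
  assumes "S \<subseteq> irrational_plane" "B \<in> rational_rectangles S"
  shows "openin (top_of_set S) B \<and> closedin (top_of_set S) B"
proof -
  obtain a b c d where B: "B = S \<inter> rectangle a b c d" and rat: "a \<in> \<rat>" "b \<in> \<rat>" "c \<in> \<rat>" "d \<in> \<rat>"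
    using assms(2) unfolding rational_rectangles_def by blast
  have "openin (top_of_set S) B"
    unfolding B using open_rectangle by (simp add: openin_open_Int)
  moreover have "B = S \<inter> {z. a \<le> Re z \<and> Re z \<le> b \<and> c \<le> Im z \<and> Im z \<le> d}"
    using assms(1) rat unfolding B rectangle_def irrational_plane_def by (auto simp: order_le_less)
  then have "closedin (top_of_set S) B"
    by (simp add: closedin_closed_Int closed_Collect_conj closed_Collect_le continuous_intros)
  ultimately show ?thesis
    by blast
qed

definition irrational_line :: "complex set" where
  "irrational_line = {z. Im z = 0 \<and> Re z \<notin> \<rat>}"

definition real_part_map :: "complex \<Rightarrow> complex" where
  "real_part_map z = complex_of_real (Re z)"

lemma real_part_map_simps [simp]: "Re (real_part_map z) = Re z" "Im (real_part_map z) = 0"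
  by (simp_all add: real_part_map_def)

(* S lies in the irrational plane and meets every vertical line over an irrational
   abscissa densely; this is what makes the projection open with clopen images of rectangles. *)
definition dense_fibres :: "complex set \<Rightarrow> bool" where
  "dense_fibres S \<longleftrightarrow> S \<subseteq> irrational_plane \<and>
     (\<forall>x c d. x \<notin> \<rat> \<and> c < d \<longrightarrow> (\<exists>t. c < t \<and> t < d \<and> Complex x t \<in> S))"

lemma real_part_map_continuous:
  assumes "S \<subseteq> irrational_plane"
  shows "continuous_map (top_of_set S) (top_of_set irrational_line) real_part_map"
  using assms unfolding real_part_map_def irrational_plane_def irrational_line_def
  by (auto intro!: continuous_intros)

lemma real_part_map_image_rectangle:
  assumes "dense_fibres S" "c < d"
  shows "real_part_map ` (S \<inter> rectangle a b c d) = irrational_line \<inter> {y. a < Re y \<and> Re y < b}"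
proof
  show "real_part_map ` (S \<inter> rectangle a b c d) \<subseteq> irrational_line \<inter> {y. a < Re y \<and> Re y < b}"
    using assms(1) by (auto simp: dense_fibres_def irrational_plane_def irrational_line_def rectangle_def)
next
  show "irrational_line \<inter> {y. a < Re y \<and> Re y < b} \<subseteq> real_part_map ` (S \<inter> rectangle a b c d)"
  proof
    fix y assume y: "y \<in> irrational_line \<inter> {y. a < Re y \<and> Re y < b}"
    then obtain t where t: "c < t" "t < d" "Complex (Re y) t \<in> S"
      using assms unfolding dense_fibres_def irrational_line_def by blast
    have "y = real_part_map (Complex (Re y) t)"
      using y by (simp add: irrational_line_def complex_eq_iff)
    moreover have "Complex (Re y) t \<in> S \<inter> rectangle a b c d"
      using y t by (simp add: rectangle_def)
    ultimately show "y \<in> real_part_map ` (S \<inter> rectangle a b c d)"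
      by blast
  qed
qed

lemma real_part_map_surjective:
  assumes "dense_fibres S"
  shows "real_part_map ` S = irrational_line"
proof
  show "real_part_map ` S \<subseteq> irrational_line"
    using assms by (auto simp: dense_fibres_def irrational_plane_def irrational_line_def)
next
  show "irrational_line \<subseteq> real_part_map ` S"
  proof
    fix y assume "y \<in> irrational_line"
    then have "y \<in> real_part_map ` (S \<inter> rectangle (Re y - 1) (Re y + 1) 0 1)"
      using real_part_map_image_rectangle[OF assms, of 0 1] by simp
    then show "y \<in> real_part_map ` S"
      by blast
  qed
qed

lemma irrational_strip_clopen:
  assumes "a \<in> \<rat>" "b \<in> \<rat>"
  shows "openin (top_of_set irrational_line) (irrational_line \<inter> {y. a < Re y \<and> Re y < b}) \<and>
         closedin (top_of_set irrational_line) (irrational_line \<inter> {y. a < Re y \<and> Re y < b})"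
proof -
  have "irrational_line \<inter> {y. a < Re y \<and> Re y < b} = irrational_line \<inter> {y. a \<le> Re y \<and> Re y \<le> b}"
    using assms unfolding irrational_line_def by (auto simp: order_le_less)
  moreover have "open {y::complex. a < Re y \<and> Re y < b}"
    by (intro open_Collect_conj open_Collect_less continuous_intros)
  moreover have "closed {y::complex. a \<le> Re y \<and> Re y \<le> b}"
    by (intro closed_Collect_conj closed_Collect_le continuous_intros)
  ultimately show ?thesis
    by (metis openin_open_Int closedin_closed_Int)
qed

(* The projection is open: a small rectangle around z in U projects onto a neighbourhood
   of Re z in the irrational line. *)
lemma real_part_map_open:
  assumes "dense_fibres S"
  shows "open_map (top_of_set S) (top_of_set irrational_line) real_part_map"
  unfolding open_map_def
proof (intro allI impI)
  fix U assume U: "openin (top_of_set S) U"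
  show "openin (top_of_set irrational_line) (real_part_map ` U)"
    unfolding openin_euclidean_subtopology_iff
  proof (intro conjI ballI)
    show "real_part_map ` U \<subseteq> irrational_line"
      using real_part_map_surjective[OF assms] openin_imp_subset[OF U] by blast
  next
    fix y assume "y \<in> real_part_map ` U"
    then obtain z where z: "z \<in> U" "y = real_part_map z"
      by blast
    obtain e where e: "e > 0" "\<And>x'. x' \<in> S \<Longrightarrow> dist x' z < e \<Longrightarrow> x' \<in> U"
      using U z by (auto simp: openin_euclidean_subtopology_iff)
    have "irrational_line \<inter> {y'. Re z - e/2 < Re y' \<and> Re y' < Re z + e/2}
            = real_part_map ` (S \<inter> rectangle (Re z - e/2) (Re z + e/2) (Im z - e/2) (Im z + e/2))"
      using real_part_map_image_rectangle[OF assms] e(1) by simp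
    also have "\<dots> \<subseteq> real_part_map ` U"
    proof (rule image_mono, rule subsetI)
      fix w assume w: "w \<in> S \<inter> rectangle (Re z - e/2) (Re z + e/2) (Im z - e/2) (Im z + e/2)"
      have "dist w z \<le> \<bar>Re (w - z)\<bar> + \<bar>Im (w - z)\<bar>"
        unfolding dist_norm by (rule cmod_le)
      also have "\<dots> < e"
        using w by (auto simp: rectangle_def abs_less_iff)
      finally show "w \<in> U"
        using e w by auto
    qed
    finally have sub: "irrational_line \<inter> {y'. Re z - e/2 < Re y' \<and> Re y' < Re z + e/2} \<subseteq> real_part_map ` U" .
    show "\<exists>e>0. \<forall>y'\<in>irrational_line. dist y' y < e \<longrightarrow> y' \<in> real_part_map ` U"
    proof (intro exI[of _ "e/2"] conjI ballI impI)
      fix y' assume y': "y' \<in> irrational_line" "dist y' y < e/2"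
      have "\<bar>Re y' - Re z\<bar> < e/2"
        using y' z abs_Re_le_cmod[of "y' - y"] by (simp add: dist_norm)
      then have "Re z - e/2 < Re y' \<and> Re y' < Re z + e/2"
        by arith
      then have "y' \<in> irrational_line \<inter> {y'. Re z - e/2 < Re y' \<and> Re y' < Re z + e/2}"
        using y'(1) by simp
      then show "y' \<in> real_part_map ` U"
        using sub by blast
    qed (use e in simp)
  qed
qed

lemma real_part_map_image_rational_rectangle:
  assumes "dense_fibres S" "B \<in> rational_rectangles S"
  shows "openin (top_of_set irrational_line) (real_part_map ` B) \<and>
         closedin (top_of_set irrational_line) (real_part_map ` B)"
proof -
  obtain a b c d where "B = S \<inter> rectangle a b c d" "a \<in> \<rat>" "b \<in> \<rat>" "c < d"
    using assms(2) unfolding rational_rectangles_def by blast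
  then show ?thesis
    using real_part_map_image_rectangle[OF assms(1)] irrational_strip_clopen by simp
qed

(* The irrational line is the real axis minus countably many points, hence Polish. *)
lemma polish_irrational_line: "polish_subspace irrational_line"
proof -
  have "irrational_line = {z. Im z = 0} - \<Union> ((\<lambda>q. {z. Re z = q}) ` \<rat>)"
    by (auto simp: irrational_line_def)
  also have "polish_subspace \<dots>"
    by (rule polish_subspace_closed_diff_countable_closed)
       (auto intro!: closed_Collect_eq continuous_intros simp: countable_rat)
  finally show ?thesis .
qed

lemma irrational_line_eq: "irrational_line = complex_of_real ` (- \<rat>)"
  by (auto simp: irrational_line_def complex_eq_iff intro!: image_eqI[of _ _ "Re _"])

definition punctured_irrational_plane :: "real \<Rightarrow> complex set" where
  "punctured_irrational_plane s = irrational_plane - (\<lambda>q. Complex (s + q) s) ` \<rat>"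

(* X is the plane minus countably many lines and points, hence Polish. *)
lemma polish_punctured_irrational_plane: "polish_subspace (punctured_irrational_plane s)"
proof -
  have "punctured_irrational_plane s =
          UNIV - \<Union> ((\<lambda>q. {z. Re z = q}) ` \<rat> \<union> (\<lambda>q. {z. Im z = q}) ` \<rat> \<union> (\<lambda>q. {Complex (s + q) s}) ` \<rat>)"
    by (auto simp: punctured_irrational_plane_def irrational_plane_def)
  also have "polish_subspace \<dots>"
    by (rule polish_subspace_closed_diff_countable_closed)
       (auto intro!: closed_Collect_eq continuous_intros simp: countable_rat)
  finally show ?thesis .
qed

(* Each vertical fibre of X misses only the countably many heights in \<rat> \<union> {s}. *)
lemma dense_fibres_punctured_irrational_plane: "dense_fibres (punctured_irrational_plane s)"
  unfolding dense_fibres_def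
proof (intro conjI allI impI)
  show "punctured_irrational_plane s \<subseteq> irrational_plane"
    by (auto simp: punctured_irrational_plane_def)
next
  fix x c d :: real assume "x \<notin> \<rat> \<and> c < d"
  moreover obtain t where "t \<in> {c<..<d}" "t \<notin> insert s \<rat>"
    using real_interval_avoid_countable_set[of c d "insert s \<rat>"] \<open>x \<notin> \<rat> \<and> c < d\<close>
    by (auto simp: countable_rat)
  ultimately show "\<exists>t. c < t \<and> t < d \<and> Complex x t \<in> punctured_irrational_plane s"
    by (auto simp: punctured_irrational_plane_def irrational_plane_def)
qed

lemma real_part_map_image_horizontal_line:
  fixes s :: real
  assumes "s \<notin> \<rat>"
  shows "real_part_map ` (punctured_irrational_plane s \<inter> {z. Im z = s}) =
         complex_of_real ` (- (\<rat> \<union> (+) s ` \<rat>))"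
proof
  show "real_part_map ` (punctured_irrational_plane s \<inter> {z. Im z = s}) \<subseteq> complex_of_real ` (- (\<rat> \<union> (+) s ` \<rat>))"
    by (auto simp: punctured_irrational_plane_def irrational_plane_def real_part_map_def complex_eq_iff)
next
  show "complex_of_real ` (- (\<rat> \<union> (+) s ` \<rat>)) \<subseteq> real_part_map ` (punctured_irrational_plane s \<inter> {z. Im z = s})"
  proof
    fix y assume "y \<in> complex_of_real ` (- (\<rat> \<union> (+) s ` \<rat>))"
    then obtain x where x: "y = complex_of_real x" "x \<notin> \<rat>" "x \<notin> (+) s ` \<rat>"
      by blast
    have "Complex x s \<in> punctured_irrational_plane s \<inter> {z. Im z = s}"
      using x assms by (auto simp: punctured_irrational_plane_def irrational_plane_def)
    moreover have "y = real_part_map (Complex x s)"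
      using x by (simp add: real_part_map_def)
    ultimately show "y \<in> real_part_map ` (punctured_irrational_plane s \<inter> {z. Im z = s})"
      by blast
  qed
qed

(* That image is not F_sigma in the irrationals: s + \<rat> is a dense set of irrationals
   outside it, and its complement \<rat> \<union> (s + \<rat>) is countable. *)
lemma not_fsigma_irrationals_minus_shifted_rationals:
  fixes s :: real
  assumes "s \<notin> \<rat>"
  shows "\<not> fsigma_in (top_of_set (- \<rat>)) (- (\<rat> \<union> (+) s ` \<rat>))"
proof (rule not_fsigma_in_dense_complement)
  show "countable (- (- (\<rat> \<union> (+) s ` \<rat>)))"
    by (simp add: countable_rat)
  have "s + q \<notin> \<rat>" if "q \<in> \<rat>" for q
    using assms that Rats_diff[of "s + q" q] by auto
  then show "(+) s ` \<rat> \<subseteq> - \<rat> - - (\<rat> \<union> (+) s ` \<rat>)"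
    by auto
  show "closure ((+) s ` \<rat>) = UNIV"
    by (simp add: closure_translation Rats_closure_real)
qed

theorem mainTheorem4:
  shows "\<exists>(IX :: complex set) (IY :: complex set) (\<B> :: complex set set) (f :: complex \<Rightarrow> complex).
    polish_subspace IX \<and> polish_subspace IY \<and>
    openin (top_of_set IX) = arbitrary union_of (\<lambda>B. B \<in> \<B>) \<and>
    (\<forall>B\<in>\<B>. openin (top_of_set IX) B \<and> closedin (top_of_set IX) B) \<and>
    continuous_map (top_of_set IX) (top_of_set IY) f \<and>
    open_map (top_of_set IX) (top_of_set IY) f \<and>
    f ` IX = IY \<and>
    (\<forall>B\<in>\<B>. openin (top_of_set IY) (f ` B) \<and> closedin (top_of_set IY) (f ` B)) \<and>
    (\<exists>F. closedin (top_of_set IX) F \<and> \<not> fsigma_in (top_of_set IY) (f ` F))"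
proof -
  obtain s :: real where s: "s \<notin> \<rat>"
    using real_interval_avoid_countable_set[of 0 1 \<rat>] countable_rat by auto
  define X where "X = punctured_irrational_plane s"
  have fibres: "dense_fibres X"
    unfolding X_def by (rule dense_fibres_punctured_irrational_plane)
  then have X_irrational: "X \<subseteq> irrational_plane"
    by (simp add: dense_fibres_def)
  define F where "F = X \<inter> {z. Im z = s}"
  have "closedin (top_of_set X) F"
    unfolding F_def by (simp add: closedin_closed_Int closed_Collect_eq continuous_intros)
  moreover have "\<not> fsigma_in (top_of_set irrational_line) (real_part_map ` F)"
    using not_fsigma_irrationals_minus_shifted_rationals[OF s]
    by (simp add: F_def X_def real_part_map_image_horizontal_line[OF s] irrational_line_eq
        fsigma_in_of_real_image)
  ultimately show ?thesis
    using polish_punctured_irrational_plane[of s] polish_irrational_line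
      rational_rectangles_base[of X] rational_rectangle_clopen[OF X_irrational]
      real_part_map_continuous[OF X_irrational] real_part_map_open[OF fibres]
      real_part_map_surjective[OF fibres] real_part_map_image_rational_rectangle[OF fibres]
    unfolding X_def by blast
qed

end
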